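(* Let $f$ be a non-constant rational function with $f(z)\neq 0$ for all $z\in\mathbb{C}$, all of whose poles are multiple. Let $Q[f]$ be the differential polynomial described in the context, of weight $w$. Then, for any $a\in\mathbb{C}$, the function $Q[f](z)-\frac{1}{z+a}$ has at least $w$ distinct zeros in $\mathbb{C}$.
   Context: Fix integers $k\geq 1$ and non-negative integers $p_0,p_1,\ldots,p_k,q_1,\ldots,q_k$ with $p_i\geq q_i$ for $i=1,\ldots,k$ and $q':=\sum_{i=1}^k q_i>0$. For a meromorphic function $f$, set $$Q[f]:=f^{p_0}\,(f^{p_1})^{(q_1)}\,(f^{p_2})^{(q_2)}\cdots(f^{p_k})^{(q_k)},$$ where $(f^{p})^{(q)}$ denotes the $q$-th derivative of $f^p$. With $p':=\sum_{i=1}^k p_i$, the degree of $Q[f]$ is $d:=p_0+p'$ and its weight is $w:=d+q'$. *)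

theory Defs
  imports "HOL-Analysis.Analysis" "HOL-Computational_Algebra.Polynomial"
begin

text \<open>For a meromorphic f this is
  evaluated at points where f is holomorphic.\<close>
definition Qdiff :: "(complex \<Rightarrow> complex) \<Rightarrow> nat \<Rightarrow> (nat \<Rightarrow> nat) \<Rightarrow> (nat \<Rightarrow> nat) \<Rightarrow> complex \<Rightarrow> complex" where
  "Qdiff f k p q z = f z ^ p 0 * (\<Prod>i\<in>{1..k}. (deriv ^^ q i) (\<lambda>x. f x ^ p i) z)"

definition Qweight :: "nat \<Rightarrow> (nat \<Rightarrow> nat) \<Rightarrow> (nat \<Rightarrow> nat) \<Rightarrow> nat" where
  "Qweight k p q = p 0 + (\<Sum>i\<in>{1..k}. p i) + (\<Sum>i\<in>{1..k}. q i)"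

end

theory Submission
  imports Defs "HOL-Computational_Algebra.Fundamental_Theorem_Algebra"
begin

text \<open>Since f has no zeros and P, R are coprime, P is a nonzero constant. Let R0 be the radical
  of R; its degree m is at most deg R / 2 because all poles are multiple. The n-th derivative
  of (P / R)^p is A / (R^p R0^n) with deg A \<le> n (m - 1), so Q[f] = B / E with E = R^d R0^q'
  and deg B \<le> q' (m - 1). The solutions of Q[f] = 1 / (z + a) off the poles are the roots of
  N = W - E, W = (z + a) B, that are not roots of R0. As E' / E = T / R0 with deg T = m - 1,
  the polynomial H = N' R0 - N T equals W' R0 - W T and has degree deg W + m - 1. A root of N
  of multiplicity l is a root of H of multiplicity at least l - 1, and at least l if it is a
  root of R0. Counting the roots of N with multiplicity gives
  deg E \<le> #solutions + deg W + m - 1, that is #solutions \<ge> d deg R + q' - m \<ge> d + q' = w.\<close>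

section \<open>Roots and multiplicities\<close>

lemma sum_count_le_size:
  assumes "finite A"
  shows "sum (count M) A \<le> size M"
proof -
  have "sum (count M) A = sum (count M) (A \<inter> set_mset M)"
    by (rule sum.mono_neutral_right) (use assms in \<open>auto simp: count_eq_zero_iff\<close>)
  also have "\<dots> \<le> sum (count M) (set_mset M)" by (rule sum_mono2) auto
  also have "\<dots> = size M" by (simp add: size_multiset_overloaded_eq)
  finally show ?thesis .
qed

lemma sum_order_le_degree:
  assumes "p \<noteq> 0" "finite A"
  shows "(\<Sum>r\<in>A. order r p) \<le> degree p"
  using sum_count_le_size[OF assms(2), of "proots p"] size_proots_le[of p] assms(1) by simp

lemma degree_eq_sum_order:
  fixes p :: "complex poly"
  assumes "p \<noteq> 0"
  shows "degree p = (\<Sum>r | poly p r = 0. order r p)"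
  using assms by (simp flip: size_proots_complex add: size_multiset_overloaded_eq)

lemma complex_poly_dvdI_order_le:
  fixes p q :: "complex poly"
  assumes "p \<noteq> 0" "q \<noteq> 0" "\<And>z. order z p \<le> order z q"
  shows "p dvd q"
proof -
  have "proots p \<subseteq># proots q" using assms by (intro mset_subset_eqI) simp
  then obtain D where D: "proots q = proots p + D" by (auto simp: mset_subset_eq_exists_conv)
  have "smult (lead_coeff p) (\<Prod>x\<in>#proots p. [:-x, 1:]) dvd (\<Prod>x\<in>#proots p. [:-x, 1:])"
    using assms(1) by (simp add: smult_dvd_iff)
  then have "p dvd (\<Prod>x\<in>#proots p. [:-x, 1:])"
    by (simp only: complex_poly_decompose_multiset)
  then have "p dvd smult (lead_coeff q) (\<Prod>x\<in>#proots q. [:-x, 1:])"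
    unfolding D by (simp add: dvd_smult)
  then show ?thesis by (simp only: complex_poly_decompose_multiset)
qed

lemma degree_eq_0_if_coprime_nonvanishing:
  fixes P R :: "complex poly"
  assumes "coprime P R" "\<And>z. poly R z \<noteq> 0 \<Longrightarrow> poly P z \<noteq> 0"
  shows "degree P = 0" "P \<noteq> 0"
proof -
  have "poly P z \<noteq> 0" for z
  proof
    assume "poly P z = 0"
    with assms(2) have "[:-z, 1:] dvd P" "[:-z, 1:] dvd R" by (auto simp: poly_eq_0_iff_dvd)
    then have "is_unit [:-z, 1:]" by (rule coprime_common_divisor[OF assms(1)])
    then show False by (simp add: is_unit_iff_degree)
  qed
  then show "degree P = 0" "P \<noteq> 0"
    using fundamental_theorem_of_algebra[of P] by (auto simp: constant_degree)
qed

section \<open>The radical of a polynomial\<close>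

text \<open>For R = 0 the index set is infinite and the product is 1.\<close>

definition poly_radical :: "'a::idom poly \<Rightarrow> 'a poly" where
  "poly_radical R = (\<Prod>z | poly R z = 0. [:-z, 1:])"

lemma lead_coeff_poly_radical: "lead_coeff (poly_radical R) = 1"
  by (simp add: poly_radical_def lead_coeff_prod)

lemma degree_poly_radical: "R \<noteq> 0 \<Longrightarrow> degree (poly_radical R) = card {z. poly R z = 0}"
  by (simp add: poly_radical_def degree_prod_eq_sum_degree poly_roots_finite)

lemma poly_radical_eq_0_iff: "R \<noteq> 0 \<Longrightarrow> poly (poly_radical R) z = 0 \<longleftrightarrow> poly R z = 0"
  by (simp add: poly_radical_def poly_prod poly_roots_finite)

lemma order_poly_radical:
  assumes "R \<noteq> 0" "poly R z = 0"
  shows "order z (poly_radical R) = 1"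
proof -
  define X where "X = (\<Prod>w \<in> {w. poly R w = 0} - {z}. [:-w, 1:])"
  have fin: "finite {w. poly R w = 0}" using assms(1) by (rule poly_roots_finite)
  have rad: "poly_radical R = [:-z, 1:] * X"
    unfolding poly_radical_def X_def using assms fin by (simp add: prod.remove)
  have X: "poly X z \<noteq> 0" "X \<noteq> 0" unfolding X_def using fin by (auto simp: poly_prod)
  have "order z ([:-z, 1:] * X) = order z [:-z, 1:] + order z X"
    using X(2) by (intro order_mult) (metis mult_eq_0_iff pCons_eq_0_iff zero_neq_one)
  then show ?thesis using order_power_n_n[of z 1] X by (simp add: rad order_0I)
qed

lemma degree_poly_radical_eq_0_iff:
  fixes R :: "complex poly"
  assumes "R \<noteq> 0"
  shows "degree (poly_radical R) = 0 \<longleftrightarrow> degree R = 0"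
  using fundamental_theorem_of_algebra[of R] assms
  by (auto simp: degree_poly_radical poly_roots_finite constant_degree elim!: degree_eq_zeroE)

lemma mult_degree_poly_radical_le:
  fixes R :: "complex poly"
  assumes "R \<noteq> 0" "\<And>z. poly R z = 0 \<Longrightarrow> c \<le> order z R"
  shows "c * degree (poly_radical R) \<le> degree R"
proof -
  have "c * degree (poly_radical R) = (\<Sum>z | poly R z = 0. c)"
    using assms(1) by (simp add: degree_poly_radical)
  also have "\<dots> \<le> (\<Sum>z | poly R z = 0. order z R)" using assms(2) by (intro sum_mono) auto
  also have "\<dots> = degree R" using degree_eq_sum_order[OF assms(1)] by simp
  finally show ?thesis .
qed

lemma dvd_pderiv_mult_poly_radical:
  fixes R :: "complex poly"
  assumes "R \<noteq> 0"
  shows "R dvd pderiv R * poly_radical R"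
proof (cases "pderiv R = 0")
  case False
  have R0: "poly_radical R \<noteq> 0" using lead_coeff_poly_radical[of R] by auto
  show ?thesis
  proof (rule complex_poly_dvdI_order_le)
    fix z
    show "order z R \<le> order z (pderiv R * poly_radical R)"
    proof (cases "poly R z = 0")
      case True
      then show ?thesis
        using order_pderiv[OF assms True] order_poly_radical[OF assms True] False R0
        by (simp add: order_mult)
    qed (simp add: order_0I)
  qed (use assms False R0 in auto)
qed simp

section \<open>Logarithmic derivatives and the twisted derivative\<close>

lemma coeff_mult_degree_le_sum:
  fixes a b :: "'a::comm_semiring_1 poly"
  assumes "degree a \<le> i" "degree b \<le> j"
  shows "coeff (a * b) (i + j) = coeff a i * coeff b j"
proof -
  have "coeff a x * coeff b (i + j - x) = (if x = i then coeff a i * coeff b j else 0)" for x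
    using assms by (cases x i rule: linorder_cases) (auto simp: coeff_eq_0)
  then show ?thesis by (simp add: coeff_mult)
qed

lemma pderiv_power_mult_log:
  fixes X Y T :: "'a::idom poly"
  assumes "pderiv X * Y = X * T"
  shows "pderiv (X ^ u) * Y = X ^ u * smult (of_nat u) T"
proof (induction u)
  case (Suc u)
  have "pderiv (X ^ Suc u) * Y = X * (pderiv (X ^ u) * Y) + X ^ u * (pderiv X * Y)"
    by (simp add: pderiv_mult algebra_simps)
  also have "\<dots> = X ^ Suc u * smult (of_nat (Suc u)) T"
    unfolding Suc assms by (simp add: algebra_simps smult_add_left)
  finally show ?case .
qed simp

lemma pderiv_power_mult_power_log:
  fixes X Y T :: "'a::idom poly"
  assumes "pderiv X * Y = X * T"
  shows "pderiv (X ^ u * Y ^ v) * Y = X ^ u * Y ^ v * (smult (of_nat u) T + smult (of_nat v) (pderiv Y))"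
proof -
  have X: "pderiv (X ^ u) * Y = X ^ u * smult (of_nat u) T"
    by (rule pderiv_power_mult_log[OF assms])
  have Y: "pderiv (Y ^ v) * Y = Y ^ v * smult (of_nat v) (pderiv Y)"
    by (rule pderiv_power_mult_log) (simp add: mult.commute)
  have "pderiv (X ^ u * Y ^ v) * Y = X ^ u * (pderiv (Y ^ v) * Y) + Y ^ v * (pderiv (X ^ u) * Y)"
    by (simp only: pderiv_mult distrib_left distrib_right mult_ac)
  also have "\<dots> = X ^ u * Y ^ v * (smult (of_nat u) T + smult (of_nat v) (pderiv Y))"
    unfolding X Y by (simp only: distrib_left mult_ac add.commute)
  finally show ?thesis .
qed

lemma log_deriv_cofactor_top_coeff:
  fixes E R0 T :: "'a::field_char_0 poly"
  assumes ET: "pderiv E * R0 = E * T" and "E \<noteq> 0"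
    and R0: "degree R0 = m" "lead_coeff R0 = 1" "m \<ge> 1"
  shows "degree T \<le> m - 1" and "coeff T (m - 1) = of_nat (degree E)"
proof -
  have "degree T \<le> m - 1 \<and> coeff T (m - 1) = of_nat (degree E)"
  proof (cases "degree E = 0")
    case True
    then have "T = 0" using ET \<open>E \<noteq> 0\<close> by (simp add: pderiv_eq_0_iff[THEN iffD2])
    then show ?thesis using True by simp
  next
    case False
    then have "pderiv E \<noteq> 0" by (simp add: pderiv_eq_0_iff)
    moreover have "R0 \<noteq> 0" using R0 by auto
    ultimately have "E * T \<noteq> 0" by (simp flip: ET)
    then have deg: "degree E + degree T = degree E - 1 + m"
      using arg_cong[OF ET, of degree] \<open>pderiv E \<noteq> 0\<close> \<open>R0 \<noteq> 0\<close> R0(1)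
      by (simp add: degree_mult_eq degree_pderiv)
    have "lead_coeff (pderiv E) = of_nat (degree E) * lead_coeff E"
      using False by (simp add: degree_pderiv coeff_pderiv)
    then have "lead_coeff T = of_nat (degree E)"
      using arg_cong[OF ET, of lead_coeff] R0(2) \<open>E \<noteq> 0\<close> by (auto simp: lead_coeff_mult)
    moreover have "degree T = m - 1" using deg False by linarith
    ultimately show ?thesis by simp
  qed
  then show "degree T \<le> m - 1" and "coeff T (m - 1) = of_nat (degree E)" by auto
qed

definition twisted_pderiv :: "'a::idom poly \<Rightarrow> 'a poly \<Rightarrow> 'a poly \<Rightarrow> 'a poly" where
  "twisted_pderiv R0 T A = pderiv A * R0 - A * T"

lemma twisted_pderiv_diff:
  "twisted_pderiv R0 T (A - B) = twisted_pderiv R0 T A - twisted_pderiv R0 T B"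
  by (simp add: twisted_pderiv_def pderiv_diff algebra_simps)

lemma twisted_pderiv_top_coeff:
  fixes A E R0 T :: "'a::field_char_0 poly"
  assumes ET: "pderiv E * R0 = E * T" "E \<noteq> 0"
    and R0: "degree R0 = m" "lead_coeff R0 = 1" "m \<ge> 1"
    and A: "degree A \<le> \<alpha>"
  shows "degree (twisted_pderiv R0 T A) \<le> \<alpha> + (m - 1)"
    and "coeff (twisted_pderiv R0 T A) (\<alpha> + (m - 1)) = coeff A \<alpha> * (of_nat \<alpha> - of_nat (degree E))"
proof -
  note T = log_deriv_cofactor_top_coeff[OF ET R0]
  have AT: "degree (A * T) \<le> \<alpha> + (m - 1)"
    "coeff (A * T) (\<alpha> + (m - 1)) = coeff A \<alpha> * of_nat (degree E)"
    using degree_mult_le[of A T] A T coeff_mult_degree_le_sum[OF A T(1)] by auto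
  have A'R0: "degree (pderiv A * R0) \<le> \<alpha> + (m - 1)
      \<and> coeff (pderiv A * R0) (\<alpha> + (m - 1)) = coeff A \<alpha> * of_nat \<alpha>"
  proof (cases "\<alpha> = 0")
    case True
    then show ?thesis using A by (simp add: pderiv_eq_0_iff[THEN iffD2])
  next
    case False
    have A': "degree (pderiv A) \<le> \<alpha> - 1" using A by (simp add: degree_pderiv)
    have "\<alpha> - 1 + m = \<alpha> + (m - 1)" using False R0(3) by simp
    moreover have "coeff (pderiv A * R0) (\<alpha> - 1 + m) = coeff A \<alpha> * of_nat \<alpha>"
      using coeff_mult_degree_le_sum[OF A', of R0 m] R0 False by (simp add: coeff_pderiv mult.commute)
    ultimately show ?thesis using degree_mult_le[of "pderiv A" R0] A' R0(1) by simp
  qed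
  show "degree (twisted_pderiv R0 T A) \<le> \<alpha> + (m - 1)"
    unfolding twisted_pderiv_def using A'R0 AT by (intro degree_diff_le) auto
  show "coeff (twisted_pderiv R0 T A) (\<alpha> + (m - 1)) = coeff A \<alpha> * (of_nat \<alpha> - of_nat (degree E))"
    unfolding twisted_pderiv_def using A'R0 AT by (simp add: algebra_simps)
qed

lemma has_field_derivative_poly_quotient:
  fixes A E R0 T :: "'a::real_normed_field poly"
  assumes ET: "pderiv E * R0 = E * T" and z: "poly E z \<noteq> 0" "poly R0 z \<noteq> 0"
  shows "((\<lambda>x. poly A x / poly E x) has_field_derivative
           poly (twisted_pderiv R0 T A) z / poly (E * R0) z) (at z)"
proof -
  have ETz: "poly (pderiv E) z * poly R0 z = poly E z * poly T z"
    using arg_cong[OF ET, of "\<lambda>p. poly p z"] by simp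
  have "((\<lambda>x. poly A x / poly E x) has_field_derivative
      (poly (pderiv A) z * poly E z - poly A z * poly (pderiv E) z) / (poly E z * poly E z)) (at z)"
    using z by (intro DERIV_divide poly_DERIV)
  also have "(poly (pderiv A) z * poly E z - poly A z * poly (pderiv E) z) / (poly E z * poly E z)
      = poly (twisted_pderiv R0 T A) z / poly (E * R0) z"
    using z by (simp add: twisted_pderiv_def field_simps flip: ETz)
  finally show ?thesis .
qed

section \<open>Counting roots\<close>

lemma order_le_order_twisted_pderiv:
  fixes N R0 T :: "'a::field_char_0 poly"
  assumes N: "N \<noteq> 0" "poly N r = 0" and H: "twisted_pderiv R0 T N \<noteq> 0"
  shows "order r N \<le> (if poly R0 r = 0 then 0 else 1) + order r (twisted_pderiv R0 T N)"
proof -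
  define L where "L = [:-r, 1:]"
  define l' where "l' = order r (pderiv N)"
  have l: "order r N = Suc l'" unfolding l'_def using N by (rule order_pderiv)
  have N': "L ^ l' dvd pderiv N" unfolding L_def l'_def by (rule order_1)
  have NL: "L ^ Suc l' dvd N" unfolding L_def l[symmetric] by (rule order_1)
  then have "L ^ l' dvd N" by (rule dvd_trans[rotated]) (simp add: le_imp_power_dvd)
  then have "L ^ l' dvd twisted_pderiv R0 T N"
    unfolding twisted_pderiv_def using N' by (intro dvd_diff dvd_mult2) auto
  then have l'H: "l' \<le> order r (twisted_pderiv R0 T N)"
    using H by (simp add: order_divides L_def)
  show ?thesis
  proof (cases "poly R0 r = 0")
    case True
    then have "L dvd R0" by (simp add: L_def poly_eq_0_iff_dvd)
    then have "L ^ Suc l' dvd pderiv N * R0"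
      using mult_dvd_mono[OF N'] by (simp only: power_Suc2)
    then have "L ^ Suc l' dvd twisted_pderiv R0 T N"
      unfolding twisted_pderiv_def using dvd_mult2[OF NL] by (rule dvd_diff)
    then have "Suc l' \<le> order r (twisted_pderiv R0 T N)"
      using H by (simp add: order_divides L_def del: power_Suc)
    then show ?thesis using True l by simp
  next
    case False
    then show ?thesis using l l'H by simp
  qed
qed

lemma degree_le_card_roots_add_degree_twisted_pderiv:
  fixes N R0 T :: "complex poly"
  assumes N: "N \<noteq> 0" and H: "twisted_pderiv R0 T N \<noteq> 0"
  shows "degree N \<le> card {r. poly N r = 0 \<and> poly R0 r \<noteq> 0} + degree (twisted_pderiv R0 T N)"
proof -
  define Z where "Z = {r. poly N r = 0}"
  have Z: "finite Z" unfolding Z_def using N by (rule poly_roots_finite)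
  have "degree N = (\<Sum>r\<in>Z. order r N)"
    unfolding Z_def using N by (rule degree_eq_sum_order)
  also have "\<dots> \<le> (\<Sum>r\<in>Z. (if poly R0 r = 0 then 0 else 1) + order r (twisted_pderiv R0 T N))"
    using N H by (intro sum_mono order_le_order_twisted_pderiv) (auto simp: Z_def)
  also have "\<dots> = card {r\<in>Z. poly R0 r \<noteq> 0} + (\<Sum>r\<in>Z. order r (twisted_pderiv R0 T N))"
    using Z by (simp add: sum.distrib sum.If_cases Int_def)
  also have "\<dots> \<le> card {r\<in>Z. poly R0 r \<noteq> 0} + degree (twisted_pderiv R0 T N)"
    using sum_order_le_degree[OF H Z] by simp
  finally show ?thesis by (simp add: Z_def)
qed

lemma degree_le_card_coincidences:
  fixes W E R0 T :: "complex poly"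
  assumes ET: "pderiv E * R0 = E * T" "E \<noteq> 0"
    and R0: "degree R0 = m" "lead_coeff R0 = 1" "m \<ge> 1"
    and W: "W \<noteq> 0" "degree W < degree E"
  shows "degree E \<le> card {z. poly W z = poly E z \<and> poly R0 z \<noteq> 0} + degree W + (m - 1)"
proof -
  have deg: "degree (W - E) = degree E"
    using W(2) degree_add_eq_right[of W "- E"] by simp
  have "twisted_pderiv R0 T E = 0" using ET(1) by (simp add: twisted_pderiv_def)
  then have H: "twisted_pderiv R0 T (W - E) = twisted_pderiv R0 T W"
    by (simp add: twisted_pderiv_diff)
  note top = twisted_pderiv_top_coeff[OF ET R0, of W "degree W", simplified]
  have "(of_nat (degree W) - of_nat (degree E) :: complex) \<noteq> 0"
    using W(2) by simp
  then have "coeff (twisted_pderiv R0 T W) (degree W + (m - 1)) \<noteq> 0"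
    using top(2) W(1) by simp
  then have "twisted_pderiv R0 T W \<noteq> 0" by auto
  moreover have "W - E \<noteq> 0" using deg W by auto
  ultimately show ?thesis
    using degree_le_card_roots_add_degree_twisted_pderiv[of "W - E" R0 T] deg H top(1) by simp
qed

lemma card_coincidences_ge:
  fixes B R R0 S :: "complex poly"
  assumes RS: "pderiv R * R0 = R * S" and R: "R \<noteq> 0"
    and R0: "degree R0 = m" "lead_coeff R0 = 1" "m \<ge> 1" "2 * m \<le> degree R"
    and B: "B \<noteq> 0" "degree B \<le> e * (m - 1)" and d: "d \<ge> 1"
  shows "d + e \<le> card {z. (z + a) * poly B z = poly (R ^ d * R0 ^ e) z \<and> poly R0 z \<noteq> 0}"
proof -
  define E where "E = R ^ d * R0 ^ e"
  define W where "W = [:a, 1:] * B"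
  have "R0 \<noteq> 0" using R0(2) by auto
  then have E: "E \<noteq> 0" "degree E = d * degree R + e * m"
    using R R0(1) by (auto simp: E_def degree_mult_eq degree_power_eq)
  have W: "W \<noteq> 0" "degree W = degree B + 1"
    using B(1) degree_mult_eq[of "[:a, 1:]" B] unfolding W_def by (simp_all del: mult_pCons_left)
  have arith: "e * (m - 1) + e = e * m" "d \<le> d * m" "m \<le> d * m" "2 * (d * m) \<le> d * degree R"
    using R0(3,4) d by (simp_all add: algebra_simps)
  then have "degree W < degree E" using E(2) W(2) B(2) d by linarith
  from degree_le_card_coincidences[OF pderiv_power_mult_power_log[OF RS, of d e, folded E_def] E(1)
      R0(1-3) W(1) this]
  have "d + e \<le> card {z. poly W z = poly E z \<and> poly R0 z \<noteq> 0}"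
    using arith E(2) W(2) B(2) R0(3) by linarith
  also have "{z. poly W z = poly E z \<and> poly R0 z \<noteq> 0}
      = {z. (z + a) * poly B z = poly (R ^ d * R0 ^ e) z \<and> poly R0 z \<noteq> 0}"
    by (simp add: W_def E_def algebra_simps)
  finally show ?thesis .
qed

section \<open>Derivatives of powers of a rational function\<close>

fun pow_deriv_numer :: "'a::idom poly \<Rightarrow> 'a poly \<Rightarrow> 'a poly \<Rightarrow> nat \<Rightarrow> nat \<Rightarrow> 'a poly" where
  "pow_deriv_numer P R0 S p 0 = P ^ p"
| "pow_deriv_numer P R0 S p (Suc n) =
     twisted_pderiv R0 (smult (of_nat p) S + smult (of_nat n) (pderiv R0)) (pow_deriv_numer P R0 S p n)"

lemma higher_deriv_rational_power:
  fixes P R R0 S :: "complex poly"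
  assumes RS: "pderiv R * R0 = R * S" and R0: "\<And>z. poly R z \<noteq> 0 \<Longrightarrow> poly R0 z \<noteq> 0"
    and "poly R z \<noteq> 0"
  shows "(deriv ^^ n) (\<lambda>x. (poly P x / poly R x) ^ p) z
           = poly (pow_deriv_numer P R0 S p n) z / poly (R ^ p * R0 ^ n) z"
  using \<open>poly R z \<noteq> 0\<close>
proof (induction n arbitrary: z)
  case 0
  then show ?case by (simp add: power_divide)
next
  case (Suc n)
  have "open {x. poly R x \<noteq> 0}"
    by (intro open_Collect_neq continuous_intros)
  from eventually_nhds_in_open[OF this, of z]
  have "eventually (\<lambda>x. poly R x \<noteq> 0) (nhds z)"
    using Suc.prems by simp
  then have "eventually (\<lambda>x. (deriv ^^ n) (\<lambda>x. (poly P x / poly R x) ^ p) x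
      = poly (pow_deriv_numer P R0 S p n) x / poly (R ^ p * R0 ^ n) x) (nhds z)"
    by eventually_elim (rule Suc.IH)
  then have "(deriv ^^ Suc n) (\<lambda>x. (poly P x / poly R x) ^ p) z
      = deriv (\<lambda>x. poly (pow_deriv_numer P R0 S p n) x / poly (R ^ p * R0 ^ n) x) z"
    by (simp add: deriv_cong_ev)
  also have "\<dots> = poly (pow_deriv_numer P R0 S p (Suc n)) z / poly (R ^ p * R0 ^ n * R0) z"
    unfolding pow_deriv_numer.simps using Suc.prems R0
    by (intro DERIV_imp_deriv has_field_derivative_poly_quotient
        pderiv_power_mult_power_log RS) auto
  finally show ?case by (simp add: mult.assoc)
qed

lemma pow_deriv_numer_top_coeff:
  fixes P R R0 S :: "'a::field_char_0 poly"
  assumes P: "degree P = 0" "P \<noteq> 0" and R: "R \<noteq> 0" "degree R \<ge> 1"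
    and RS: "pderiv R * R0 = R * S"
    and R0: "degree R0 = m" "lead_coeff R0 = 1" "m \<ge> 1"
    and "p \<ge> 1 \<or> n = 0"
  shows "degree (pow_deriv_numer P R0 S p n) \<le> n * (m - 1)
    \<and> coeff (pow_deriv_numer P R0 S p n) (n * (m - 1)) \<noteq> 0"
  using \<open>p \<ge> 1 \<or> n = 0\<close>
proof (induction n)
  case 0
  have "coeff P 0 \<noteq> 0" using P leading_coeff_0_iff[of P] by simp
  then show ?case using P by (simp add: degree_power_eq coeff_0_power)
next
  case (Suc n)
  define E where "E = R ^ p * R0 ^ n"
  have "R0 \<noteq> 0" using R0 by auto
  then have E: "E \<noteq> 0" "degree E = p * degree R + n * m"
    using R R0 by (auto simp: E_def degree_mult_eq degree_power_eq)
  have "p * degree R \<ge> 1" "n * (m - 1) \<le> n * m"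
    using Suc.prems R(2) by simp_all
  then have "n * (m - 1) \<noteq> degree E"
    using E(2) by linarith
  then have "(of_nat (n * (m - 1)) - of_nat (degree E) :: 'a) \<noteq> 0"
    by (simp only: right_minus_eq of_nat_eq_iff not_False_eq_True)
  moreover note top = twisted_pderiv_top_coeff[OF pderiv_power_mult_power_log[OF RS, of p n, folded E_def]
      E(1) R0, of "pow_deriv_numer P R0 S p n" "n * (m - 1)"]
  ultimately show ?case
    using Suc by (simp add: add.commute)
qed

section \<open>The differential polynomial as a quotient of polynomials\<close>

definition Qnumer :: "'a::idom poly \<Rightarrow> 'a poly \<Rightarrow> 'a poly \<Rightarrow> nat \<Rightarrow> (nat \<Rightarrow> nat) \<Rightarrow> (nat \<Rightarrow> nat) \<Rightarrow> 'a poly" where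
  "Qnumer P R0 S k p q = P ^ p 0 * (\<Prod>i\<in>{1..k}. pow_deriv_numer P R0 S (p i) (q i))"

lemma Qdiff_eq_Qnumer_divide:
  fixes P R R0 S :: "complex poly"
  assumes f: "\<And>z. f z = poly P z / poly R z"
    and RS: "pderiv R * R0 = R * S" and R0: "\<And>z. poly R z \<noteq> 0 \<Longrightarrow> poly R0 z \<noteq> 0"
    and z: "poly R z \<noteq> 0"
  shows "Qdiff f k p q z = poly (Qnumer P R0 S k p q) z
           / poly (R ^ (p 0 + (\<Sum>i\<in>{1..k}. p i)) * R0 ^ (\<Sum>i\<in>{1..k}. q i)) z"
proof -
  have "f = (\<lambda>x. poly P x / poly R x)" using f by auto
  then have "Qdiff f k p q z = (poly P z / poly R z) ^ p 0 *
      (\<Prod>i\<in>{1..k}. poly (pow_deriv_numer P R0 S (p i) (q i)) z / poly (R ^ p i * R0 ^ q i) z)"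
    by (simp add: Qdiff_def higher_deriv_rational_power[OF RS R0 z])
  also have "\<dots> = poly (Qnumer P R0 S k p q) z
      / poly (R ^ (p 0 + (\<Sum>i\<in>{1..k}. p i)) * R0 ^ (\<Sum>i\<in>{1..k}. q i)) z"
    by (simp add: Qnumer_def poly_prod prod_dividef prod.distrib power_sum power_add power_divide)
  finally show ?thesis .
qed

lemma Qnumer_degree:
  fixes P R R0 S :: "'a::field_char_0 poly"
  assumes P: "degree P = 0" "P \<noteq> 0" and R: "R \<noteq> 0" "degree R \<ge> 1"
    and RS: "pderiv R * R0 = R * S"
    and R0: "degree R0 = m" "lead_coeff R0 = 1" "m \<ge> 1"
    and pq: "\<And>i. i \<in> {1..k} \<Longrightarrow> q i \<le> p i"
  shows "Qnumer P R0 S k p q \<noteq> 0" "degree (Qnumer P R0 S k p q) \<le> (\<Sum>i\<in>{1..k}. q i) * (m - 1)"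
proof -
  have A: "pow_deriv_numer P R0 S (p i) (q i) \<noteq> 0
      \<and> degree (pow_deriv_numer P R0 S (p i) (q i)) \<le> q i * (m - 1)" if "i \<in> {1..k}" for i
  proof -
    have "p i \<ge> 1 \<or> q i = 0" using pq[OF that] by linarith
    from pow_deriv_numer_top_coeff[OF P R RS R0 this] show ?thesis by auto
  qed
  have "degree (\<Prod>i\<in>{1..k}. pow_deriv_numer P R0 S (p i) (q i)) \<le> (\<Sum>i\<in>{1..k}. q i * (m - 1))"
    using A by (intro order.trans[OF degree_prod_sum_le] sum_mono) auto
  moreover have "degree (Qnumer P R0 S k p q)
      \<le> degree (P ^ p 0) + degree (\<Prod>i\<in>{1..k}. pow_deriv_numer P R0 S (p i) (q i))"
    unfolding Qnumer_def by (rule degree_mult_le)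
  ultimately show "degree (Qnumer P R0 S k p q) \<le> (\<Sum>i\<in>{1..k}. q i) * (m - 1)"
    using P by (simp add: degree_power_eq sum_distrib_right)
  show "Qnumer P R0 S k p q \<noteq> 0" using A P by (simp add: Qnumer_def)
qed

lemma coincidences_subset_Qdiff_solutions:
  fixes P R R0 S :: "complex poly" and k :: nat and p q :: "nat \<Rightarrow> nat"
  assumes f: "\<And>z. f z = poly P z / poly R z"
    and RS: "pderiv R * R0 = R * S" and R0: "\<And>z. poly R0 z = 0 \<longleftrightarrow> poly R z = 0"
  defines "B \<equiv> Qnumer P R0 S k p q"
    and "E \<equiv> R ^ (p 0 + (\<Sum>i\<in>{1..k}. p i)) * R0 ^ (\<Sum>i\<in>{1..k}. q i)"
  shows "{z. (z + a) * poly B z = poly E z \<and> poly R0 z \<noteq> 0}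
           \<subseteq> {z. poly R z \<noteq> 0 \<and> z + a \<noteq> 0 \<and> Qdiff f k p q z - 1 / (z + a) = 0}"
proof
  fix z assume "z \<in> {z. (z + a) * poly B z = poly E z \<and> poly R0 z \<noteq> 0}"
  then have z: "(z + a) * poly B z = poly E z" "poly R0 z \<noteq> 0" by simp_all
  then have Rz: "poly R z \<noteq> 0" using R0 by blast
  then have "poly E z \<noteq> 0" using z(2) by (simp add: E_def)
  then have nz: "z + a \<noteq> 0" "poly B z \<noteq> 0" using z(1) by auto
  have "Qdiff f k p q z = poly B z / poly E z"
    unfolding B_def E_def using R0 by (intro Qdiff_eq_Qnumer_divide[OF f RS _ Rz]) blast
  also have "\<dots> = 1 / (z + a)" using nz by (simp flip: z(1))
  finally show "z \<in> {z. poly R z \<noteq> 0 \<and> z + a \<noteq> 0 \<and> Qdiff f k p q z - 1 / (z + a) = 0}"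
    using Rz nz by simp
qed

theorem lemma5:
  fixes P R :: "complex poly" and f :: "complex \<Rightarrow> complex"
    and k :: nat and p q :: "nat \<Rightarrow> nat" and a :: complex
  assumes rat: "\<And>z. f z = poly P z / poly R z"
    and R_nz: "R \<noteq> 0"
    and cop: "coprime P R"
    and nonconst: "\<not> (\<exists>c. \<forall>z. poly R z \<noteq> 0 \<longrightarrow> f z = c)"
    and no_zeros: "\<And>z. poly R z \<noteq> 0 \<Longrightarrow> f z \<noteq> 0"
    and multiple_poles: "\<And>z. poly R z = 0 \<Longrightarrow> order z R \<ge> 2"
    and k: "k \<ge> 1"
    and pq: "\<And>i. i \<in> {1..k} \<Longrightarrow> p i \<ge> q i"
    and qpos: "(\<Sum>i\<in>{1..k}. q i) > 0"
  shows "infinite {z. poly R z \<noteq> 0 \<and> z + a \<noteq> 0 \<and> Qdiff f k p q z - 1 / (z + a) = 0}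
         \<or> Qweight k p q \<le> card {z. poly R z \<noteq> 0 \<and> z + a \<noteq> 0 \<and> Qdiff f k p q z - 1 / (z + a) = 0}"
proof -
  have P: "degree P = 0" "P \<noteq> 0"
    using degree_eq_0_if_coprime_nonvanishing[OF cop] no_zeros by (auto simp: rat)
  have "degree R \<noteq> 0"
  proof
    assume "degree R = 0"
    then have "f z = poly P 0 / poly R 0" for z
      using P by (auto simp: rat elim!: degree_eq_zeroE)
    with nonconst show False by blast
  qed
  define R0 where "R0 = poly_radical R"
  obtain S where RS: "pderiv R * R0 = R * S"
    using dvd_pderiv_mult_poly_radical[OF R_nz] unfolding R0_def by (elim dvdE) blast
  have R0: "lead_coeff R0 = 1" "degree R0 \<ge> 1" "2 * degree R0 \<le> degree R"
    using lead_coeff_poly_radical degree_poly_radical_eq_0_iff[OF R_nz] \<open>degree R \<noteq> 0\<close>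
      mult_degree_poly_radical_le[OF R_nz multiple_poles] unfolding R0_def by auto
  have "(\<Sum>i\<in>{1..k}. q i) \<le> (\<Sum>i\<in>{1..k}. p i)" using pq by (rule sum_mono)
  then have "Qweight k p q \<le> card {z. (z + a) * poly (Qnumer P R0 S k p q) z
      = poly (R ^ (p 0 + (\<Sum>i\<in>{1..k}. p i)) * R0 ^ (\<Sum>i\<in>{1..k}. q i)) z \<and> poly R0 z \<noteq> 0}"
      (is "_ \<le> card ?C")
    unfolding Qweight_def using qpos \<open>degree R \<noteq> 0\<close>
    by (intro card_coincidences_ge[OF RS R_nz refl R0] Qnumer_degree[OF P R_nz _ RS refl R0(1,2) pq]) auto
  moreover have "?C \<subseteq> {z. poly R z \<noteq> 0 \<and> z + a \<noteq> 0 \<and> Qdiff f k p q z - 1 / (z + a) = 0}"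
    using R_nz by (intro coincidences_subset_Qdiff_solutions[OF rat RS]) (simp add: R0_def poly_radical_eq_0_iff)
  ultimately show ?thesis by (meson card_mono order.trans)
qed

end
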